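(* Let $F$ be a Ferrers diagram and let $c\in\mathsf{Rec}^{\mathsf{min}}(G(F))$. Define the $0/1$-filling $T=\phi_{CT}(c)$ of $F$ by setting, for each cell in row $i\in\mathsf{rows}(F)$ and column $j\in\mathsf{cols}(F)$, $T_{ij}=0$ if $i$ topples after $j$ in $\mathsf{CanonTop}(c)$ and $T_{ij}=1$ if $i$ topples before $j$ in $\mathsf{CanonTop}(c)$. Then $\phi_{CT}$ is the inverse of the bijection $\phi_{TC}:\mathsf{EWtab}(F)\to\mathsf{Rec}^{\mathsf{min}}(G(F))$; in particular $T\in\mathsf{EWtab}(F)$ and $\phi_{TC}(T)=c$.
   Context: Ferrers diagrams and graphs: a Ferrers diagram $F$ (English convention) of semiperimeter $n+1$ has rows and columns labeled by $0,\ldots,n$: the $n+1$ unit steps of its south-east boundary path, traversed from top-right to bottom-left, are labeled $0,\ldots,n$; a vertical step labels the row it bounds, a horizontal step the column it bounds (top row labeled $0$). $\mathsf{rows}(F)$, $\mathsf{cols}(F)$ are the label sets; $F$ has a cell in row $i$, column $j$ iff $i<j$. $G(F)$ has vertex set $\{0,\ldots,n\}$ with edges $\{i,j\}$, $i\in\mathsf{rows}(F)$, $j\in\mathsf{cols}(F)$, $i<j$. Sandpile model with sink $0$: configurations $c\in\mathbb{N}^n$; non-sink $v$ unstable if $c_v\ge\deg(v)$; toppling sends one grain to each neighbour (grains to $0$ disappear); toppling the sink adds a grain to each neighbour of $0$. Recurrent: stable configurations obtainable from $c_v=\deg(v)-1$ by adding grains and stabilizing. $\mathsf{Rec}^{\mathsf{min}}(G)$: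 recurrent configurations of minimal total number of grains. Canonical toppling of a recurrent $c$: topple the sink ($U^{(0)}_c=\{0\}$), then alternately topple simultaneously all unstable vertices in $\mathsf{cols}(F)$ ($V^{(1)}_c$), all unstable in $\mathsf{rows}(F)$ ($U^{(1)}_c$), etc.; $\mathsf{CanonTop}(c)=(U^{(0)}_c,V^{(1)}_c,U^{(1)}_c,\ldots)$ is an ordered partition of $\{0,\ldots,n\}$, each vertex toppling exactly once; "$a$ topples before $b$" means the block of $a$ precedes the block of $b$. EW-tableaux: a $0/1$-filling $T$ of $F$ ($T_{ij}$ = entry in row $i$, column $j$) such that (1) the top row consists of 1s, (2) every other row contains at least one 0, (3) no four cells at the corners of a rectangle have 0s in two diagonally opposite corners and 1s in the other two. $\mathsf{EWtab}(F)$ is their set. The map $\phi_{TC}$ sends $T$ to the configuration $c$ with $c_i$ = number of 1s in row $i$ if $i\in\mathsf{rows}(F)$, and $c_i$ = number of 0s in column $i$ if $i\in\mathsf{cols}(F)$, $i\ne 0$; it is known to be a bijection $\mathsf{EWtab}(F)\to\mathsf{Rec}^{\mathsf{min}}(G(F))$. *)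

theory Defs
  imports Main
begin

text \<open>A Ferrers diagram of semiperimeter n+1 is encoded as a pair (n, R) where
  R is the set of row labels among the boundary-step labels 0..n; the remaining
  labels are column labels.  The first step (label 0) bounds the top row and
  the last step (label n) is horizontal.\<close>

type_synonym ferrers = "nat \<times> nat set"

definition ferrers :: "ferrers \<Rightarrow> bool" where
  "ferrers F \<longleftrightarrow> snd F \<subseteq> {0..fst F} \<and> 0 \<in> snd F \<and> fst F \<notin> snd F"

definition rows :: "ferrers \<Rightarrow> nat set" where
  "rows F = snd F"

definition cols :: "ferrers \<Rightarrow> nat set" where
  "cols F = {0..fst F} - snd F"

definition cell :: "ferrers \<Rightarrow> nat \<Rightarrow> nat \<Rightarrow> bool" where
  "cell F i j \<longleftrightarrow> i \<in> rows F \<and> j \<in> cols F \<and> i < j"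

definition adj :: "ferrers \<Rightarrow> nat \<Rightarrow> nat \<Rightarrow> bool" where
  "adj F u v \<longleftrightarrow> cell F u v \<or> cell F v u"

definition deg :: "ferrers \<Rightarrow> nat \<Rightarrow> nat" where
  "deg F v = card {u. u \<le> fst F \<and> adj F u v}"

definition nonsink :: "ferrers \<Rightarrow> nat set" where
  "nonsink F = {1..fst F}"

text \<open>Configurations: functions nat => nat, meaningful on the non-sink vertices 1..n
  (and 0 elsewhere).\<close>
type_synonym config = "nat \<Rightarrow> nat"

definition stable :: "ferrers \<Rightarrow> config \<Rightarrow> bool" where
  "stable F c \<longleftrightarrow> (\<forall>v\<in>nonsink F. c v < deg F v)"

definition topple_set :: "ferrers \<Rightarrow> nat set \<Rightarrow> config \<Rightarrow> config" where
  "topple_set F S c = (\<lambda>u. if u \<in> nonsink F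
      then c u - (if u \<in> S then deg F u else 0) + card {v \<in> S. v \<le> fst F \<and> adj F u v}
      else 0)"

definition topple_step :: "ferrers \<Rightarrow> config \<Rightarrow> config \<Rightarrow> bool" where
  "topple_step F c c' \<longleftrightarrow> (\<exists>v\<in>nonsink F. deg F v \<le> c v \<and> c' = topple_set F {v} c)"

definition stabilizes_to :: "ferrers \<Rightarrow> config \<Rightarrow> config \<Rightarrow> bool" where
  "stabilizes_to F c c' \<longleftrightarrow> (topple_step F)\<^sup>*\<^sup>* c c' \<and> stable F c'"

definition cmax :: "ferrers \<Rightarrow> config" where
  "cmax F = (\<lambda>u. if u \<in> nonsink F then deg F u - 1 else 0)"

inductive reachable :: "ferrers \<Rightarrow> config \<Rightarrow> bool" for F where
  start: "reachable F (cmax F)"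
| add: "reachable F c \<Longrightarrow> v \<in> nonsink F \<Longrightarrow> stabilizes_to F (c(v := c v + 1)) c'
          \<Longrightarrow> reachable F c'"

definition recurrent :: "ferrers \<Rightarrow> config \<Rightarrow> bool" where
  "recurrent F c \<longleftrightarrow> stable F c \<and> reachable F c"

definition Rec_min :: "ferrers \<Rightarrow> config set" where
  "Rec_min F = {c. recurrent F c \<and>
     (\<forall>d. recurrent F d \<longrightarrow> sum c (nonsink F) \<le> sum d (nonsink F))}"

definition canon_blk_of :: "ferrers \<Rightarrow> config \<Rightarrow> nat \<Rightarrow> nat set" where
  "canon_blk_of F d k = (if k = 0 then {0} else
     {v \<in> nonsink F. (if odd k then v \<in> cols F else v \<in> rows F) \<and> deg F v \<le> d v})"

primrec canon_cfg :: "ferrers \<Rightarrow> config \<Rightarrow> nat \<Rightarrow> config" where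
  "canon_cfg F c 0 = c"
| "canon_cfg F c (Suc k) = topple_set F (canon_blk_of F (canon_cfg F c k) k) (canon_cfg F c k)"

definition canon_blk :: "ferrers \<Rightarrow> config \<Rightarrow> nat \<Rightarrow> nat set" where
  "canon_blk F c k = canon_blk_of F (canon_cfg F c k) k"

definition topple_time :: "ferrers \<Rightarrow> config \<Rightarrow> nat \<Rightarrow> nat" where
  "topple_time F c v = (LEAST k. v \<in> canon_blk F c k)"

definition topples_before :: "ferrers \<Rightarrow> config \<Rightarrow> nat \<Rightarrow> nat \<Rightarrow> bool" where
  "topples_before F c a b \<longleftrightarrow> topple_time F c a < topple_time F c b"

text \<open>0/1-fillings: functions nat => nat => nat, with value 0 outside the cells.\<close>
type_synonym filling = "nat \<Rightarrow> nat \<Rightarrow> nat"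

definition EWtab :: "ferrers \<Rightarrow> filling set" where
  "EWtab F = {T.
     (\<forall>i j. \<not> cell F i j \<longrightarrow> T i j = 0) \<and>
     (\<forall>i j. cell F i j \<longrightarrow> T i j \<in> {0, 1}) \<and>
     (\<forall>j. cell F 0 j \<longrightarrow> T 0 j = 1) \<and>
     (\<forall>i\<in>rows F. i \<noteq> 0 \<longrightarrow> (\<exists>j. cell F i j \<and> T i j = 0)) \<and>
     (\<forall>i1 i2 j1 j2. i1 < i2 \<and> j1 < j2 \<and> cell F i1 j1 \<and> cell F i1 j2 \<and>
        cell F i2 j1 \<and> cell F i2 j2 \<longrightarrow>
        \<not> (T i1 j1 = 0 \<and> T i2 j2 = 0 \<and> T i1 j2 = 1 \<and> T i2 j1 = 1) \<and>
        \<not> (T i1 j2 = 0 \<and> T i2 j1 = 0 \<and> T i1 j1 = 1 \<and> T i2 j2 = 1))}"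

definition phi_TC :: "ferrers \<Rightarrow> filling \<Rightarrow> config" where
  "phi_TC F T = (\<lambda>i. if i \<in> nonsink F then
      (if i \<in> rows F then card {j. cell F i j \<and> T i j = 1}
       else card {r. cell F r i \<and> T r i = 0})
    else 0)"

definition phi_CT :: "ferrers \<Rightarrow> config \<Rightarrow> filling" where
  "phi_CT F c = (\<lambda>i j. if cell F i j then (if topples_before F c i j then 1 else 0) else 0)"

end

theory Submission
  imports Defs
begin

(* Let c = phi_TC F T for an EW-tableau T, and let S be the set of vertices toppled during the
  first phases of the canonical toppling of c. By induction over the phases, T agrees with the
  cut S: a cell whose row lies in S and whose column does not holds a 1, and in the opposite
  situation a 0. As c counts the 1s of each row and the 0s of each column, a column outside S is
  then unstable exactly when every row holding a 1 in it lies in S, and a row exactly when every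
  column holding a 0 in it does. If a column phase and the following row phase toppled nothing,
  the untoppled rows and columns would block each other, which the rectangle condition forbids.
  Hence every vertex topples, and a cell holds a 1 exactly when its row topples before its
  column. *)

lemma row_not_col: "i \<in> rows F \<Longrightarrow> i \<notin> cols F"
  unfolding rows_def cols_def by auto

lemma row_or_col: "v \<le> fst F \<Longrightarrow> v \<in> rows F \<or> v \<in> cols F"
  unfolding rows_def cols_def by auto

lemma cellD: "cell F i j \<Longrightarrow> i \<in> rows F \<and> j \<in> cols F \<and> i < j \<and> j \<le> fst F"
  unfolding cell_def cols_def by auto

lemma ferrers_zero_row: "ferrers F \<Longrightarrow> 0 \<in> rows F"
  unfolding ferrers_def rows_def by simp

lemma ferrers_row_le: "ferrers F \<Longrightarrow> i \<in> rows F \<Longrightarrow> i \<le> fst F"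
  unfolding ferrers_def rows_def by auto

lemma ferrers_col_nonsink: "ferrers F \<Longrightarrow> j \<in> cols F \<Longrightarrow> j \<in> nonsink F"
  using ferrers_zero_row row_not_col unfolding nonsink_def cols_def
  by (metis Diff_iff atLeastAtMost_iff less_one linorder_not_le)

lemma ferrers_row_nonsink: "ferrers F \<Longrightarrow> i \<in> rows F \<Longrightarrow> i \<noteq> 0 \<Longrightarrow> i \<in> nonsink F"
  using ferrers_row_le unfolding nonsink_def by auto

lemma cell_right: "cell F i j \<Longrightarrow> j < a \<Longrightarrow> a \<in> cols F \<Longrightarrow> cell F i a"
  unfolding cell_def by simp

lemma finite_row_cells: "finite {j. cell F i j}"
  by (rule finite_subset[of _ "{..fst F}"]) (auto dest: cellD)

lemma finite_col_cells: "finite {i. cell F i j}"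
  by (rule finite_subset[of _ "{..fst F}"]) (auto dest!: cellD)

lemma adj_sym: "adj F u v \<longleftrightarrow> adj F v u"
  unfolding adj_def by auto

lemma adj_row: "i \<in> rows F \<Longrightarrow> adj F i u \<longleftrightarrow> cell F i u"
  unfolding adj_def using cellD row_not_col by blast

lemma adj_col: "j \<in> cols F \<Longrightarrow> adj F j u \<longleftrightarrow> cell F u j"
  unfolding adj_def using cellD row_not_col by blast

definition deg_in :: "ferrers \<Rightarrow> nat set \<Rightarrow> nat \<Rightarrow> nat" where
  "deg_in F S v = card {u \<in> S. u \<le> fst F \<and> adj F v u}"

lemma deg_eq_deg_in_UNIV: "deg F v = deg_in F UNIV v"
  unfolding deg_def deg_in_def by (simp add: adj_sym)

lemma deg_in_le_deg: "deg_in F S v \<le> deg F v"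
  unfolding deg_eq_deg_in_UNIV deg_in_def by (rule card_mono) auto

lemma deg_in_Un:
  assumes "S \<inter> B = {}"
  shows "deg_in F (S \<union> B) v = deg_in F S v + deg_in F B v"
proof -
  have "{u \<in> S \<union> B. u \<le> fst F \<and> adj F v u} =
      {u \<in> S. u \<le> fst F \<and> adj F v u} \<union> {u \<in> B. u \<le> fst F \<and> adj F v u}"
    by auto
  then show ?thesis
    unfolding deg_in_def using assms by (simp add: card_Un_disjoint disjoint_iff)
qed

lemma deg_in_row: "i \<in> rows F \<Longrightarrow> deg_in F S i = card {j \<in> S. cell F i j}"
  unfolding deg_in_def using adj_row cellD by (metis (lifting))

lemma deg_in_col: "j \<in> cols F \<Longrightarrow> deg_in F S j = card {i \<in> S. cell F i j}"
  unfolding deg_in_def using adj_col cellD by (metis (lifting) less_imp_le order.strict_trans2)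

lemma topple_set_nonsink:
  "v \<in> nonsink F \<Longrightarrow>
    topple_set F B d v = d v - (if v \<in> B then deg F v else 0) + deg_in F B v"
  unfolding topple_set_def deg_in_def by simp

(* d is what remains of c after every vertex of S has toppled once, in any order; stated
  additively because subtraction on nat truncates. *)
definition fired :: "ferrers \<Rightarrow> config \<Rightarrow> nat set \<Rightarrow> config \<Rightarrow> bool" where
  "fired F c S d \<longleftrightarrow>
    (\<forall>v \<in> nonsink F. d v + (if v \<in> S then deg F v else 0) = c v + deg_in F S v)"

lemma fired_empty: "fired F c {} c"
  unfolding fired_def deg_in_def by simp

lemma fired_topple_set:
  assumes "fired F c S d" and "S \<inter> B = {}" and "\<forall>u \<in> B \<inter> nonsink F. deg F u \<le> d u"
  shows "fired F c (S \<union> B) (topple_set F B d)"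
  unfolding fired_def
proof
  fix v assume v: "v \<in> nonsink F"
  have eq: "d v + (if v \<in> S then deg F v else 0) = c v + deg_in F S v"
    using assms(1) v unfolding fired_def by blast
  show "topple_set F B d v + (if v \<in> S \<union> B then deg F v else 0) = c v + deg_in F (S \<union> B) v"
  proof (cases "v \<in> B")
    case True
    then have "v \<notin> S" and "deg F v \<le> d v" using assms(2,3) v by auto
    then show ?thesis using True eq v by (simp add: topple_set_nonsink deg_in_Un[OF assms(2)])
  next
    case False
    then show ?thesis using eq v by (simp add: topple_set_nonsink deg_in_Un[OF assms(2)])
  qed
qed

lemma fired_stable:
  assumes "stable F c" and "fired F c S d" and "v \<in> S" and "v \<in> nonsink F"
  shows "d v < deg F v"
  using assms deg_in_le_deg[of F S v] unfolding stable_def fired_def by fastforce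

definition toppled :: "ferrers \<Rightarrow> config \<Rightarrow> nat \<Rightarrow> nat set" where
  "toppled F c k = (\<Union>m<k. canon_blk F c m)"

lemma toppled_0 [simp]: "toppled F c 0 = {}"
  unfolding toppled_def by simp

lemma toppled_Suc: "toppled F c (Suc k) = toppled F c k \<union> canon_blk F c k"
  unfolding toppled_def lessThan_Suc by auto

lemma canon_blk_0 [simp]: "canon_blk F c 0 = {0}"
  unfolding canon_blk_def canon_blk_of_def by simp

lemma canon_blk_pos:
  "0 < k \<Longrightarrow> canon_blk F c k =
    {v \<in> nonsink F. (if odd k then v \<in> cols F else v \<in> rows F) \<and> deg F v \<le> canon_cfg F c k v}"
  unfolding canon_blk_def canon_blk_of_def by simp

lemma canon_cfg_Suc_blk: "canon_cfg F c (Suc k) = topple_set F (canon_blk F c k) (canon_cfg F c k)"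
  unfolding canon_blk_def by simp

lemma canon_blk_subset: "canon_blk F c k \<subseteq> {0..fst F}"
  by (cases k) (auto simp: canon_blk_pos nonsink_def)

lemma toppled_subset: "toppled F c k \<subseteq> {0..fst F}"
  unfolding toppled_def using canon_blk_subset by blast

lemma toppled_mono: "k \<le> l \<Longrightarrow> toppled F c k \<subseteq> toppled F c l"
  unfolding toppled_def by (rule UN_mono) auto

lemma canon_blk_disjoint_if_fired:
  assumes "stable F c" and "fired F c (toppled F c k) (canon_cfg F c k)"
  shows "toppled F c k \<inter> canon_blk F c k = {}"
proof (cases "k = 0")
  case False
  then show ?thesis
    using fired_stable[OF assms] by (fastforce simp: canon_blk_pos)
qed simp

lemma canon_cfg_fired:
  assumes "stable F c"
  shows "fired F c (toppled F c k) (canon_cfg F c k)"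
proof (induction k)
  case 0
  show ?case using fired_empty by simp
next
  case (Suc k)
  have "\<forall>u \<in> canon_blk F c k \<inter> nonsink F. deg F u \<le> canon_cfg F c k u"
    by (cases "k = 0") (auto simp: canon_blk_pos nonsink_def)
  with Suc show ?case
    unfolding toppled_Suc canon_cfg_Suc_blk
    using canon_blk_disjoint_if_fired[OF assms] by (intro fired_topple_set)
qed

lemma toppled_canon_blk_disjoint:
  "stable F c \<Longrightarrow> toppled F c k \<inter> canon_blk F c k = {}"
  by (rule canon_blk_disjoint_if_fired[OF _ canon_cfg_fired])

lemma canon_blk_row_col_distinct:
  assumes "i \<in> rows F" "j \<in> cols F" "i \<in> canon_blk F c k" "j \<in> canon_blk F c k"
  shows False
  using assms row_not_col by (cases "k = 0") (auto simp: canon_blk_pos split: if_splits)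

lemma topple_time_in_canon_blk:
  "v \<in> canon_blk F c k \<Longrightarrow> v \<in> canon_blk F c (topple_time F c v)"
  unfolding topple_time_def by (rule LeastI)

lemma in_toppled_iff_topple_time:
  assumes "v \<in> canon_blk F c k"
  shows "v \<in> toppled F c l \<longleftrightarrow> topple_time F c v < l"
  using topple_time_in_canon_blk[OF assms] Least_le[of "\<lambda>k. v \<in> canon_blk F c k"]
  unfolding toppled_def topple_time_def by (auto intro: le_less_trans)

lemma chain_saturates:
  fixes f :: "nat \<Rightarrow> 'a set"
  assumes "finite A" and "\<And>m. f m \<subseteq> A" and "\<And>m. f m \<subseteq> f (Suc m)"
    and "\<And>m. f m \<noteq> A \<Longrightarrow> f m \<subset> f (Suc m)"
  shows "f (card A) = A"
proof -
  have "min m (card A) \<le> card (f m)" for m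
  proof (induction m)
    case (Suc m)
    show ?case
    proof (cases "f m = A")
      case True
      then have "f (Suc m) = A" using assms(2,3) by blast
      then show ?thesis by simp
    next
      case False
      then have "card (f m) < card (f (Suc m))"
        using assms by (meson finite_subset psubset_card_mono)
      with Suc show ?thesis by linarith
    qed
  qed simp
  then show ?thesis using card_seteq[OF assms(1,2)] by (metis min.idem)
qed

lemma card_binary_split:
  fixes f :: "'a \<Rightarrow> nat"
  assumes "finite A" and "\<And>x. x \<in> A \<Longrightarrow> f x = 0 \<or> f x = 1"
  shows "card A = card {x \<in> A. f x = 1} + card {x \<in> A. f x = 0}"
proof -
  have "A = {x \<in> A. f x = 1} \<union> {x \<in> A. f x = 0}" using assms(2) by blast
  moreover have "{x \<in> A. f x = 1} \<inter> {x \<in> A. f x = 0} = {}" by auto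
  ultimately show ?thesis using assms(1) by (metis (no_types, lifting) card_Un_disjoint finite_Un)
qed

lemma card_le_iff_eq_subset:
  "finite A \<Longrightarrow> B \<subseteq> A \<Longrightarrow> card A \<le> card B \<longleftrightarrow> B = A"
  using card_seteq by blast

locale ew_tableau =
  fixes F :: ferrers and T :: filling
  assumes ferrers: "ferrers F" and EW: "T \<in> EWtab F"
begin

lemma T_outside: "\<not> cell F i j \<Longrightarrow> T i j = 0"
  using EW unfolding EWtab_def by (elim CollectE conjE) blast

lemma T_binary: "cell F i j \<Longrightarrow> T i j = 0 \<or> T i j = 1"
  using EW unfolding EWtab_def by (elim CollectE conjE) blast

lemma T_top_row: "cell F 0 j \<Longrightarrow> T 0 j = 1"
  using EW unfolding EWtab_def by (elim CollectE conjE) blast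

lemma row_has_zero: "i \<in> rows F \<Longrightarrow> i \<noteq> 0 \<Longrightarrow> \<exists>j. cell F i j \<and> T i j = 0"
  using EW unfolding EWtab_def by (elim CollectE conjE) blast

lemma no_crossing:
  assumes "cell F i j" "cell F i a" "cell F i' j" "cell F i' a" "j < a"
    and "T i j = 0" "T i a = 1" "T i' j = 1" "T i' a = 0"
  shows False
proof -
  have rect: "\<And>i1 i2 j1 j2. i1 < i2 \<Longrightarrow> j1 < j2 \<Longrightarrow> cell F i1 j1 \<Longrightarrow> cell F i1 j2 \<Longrightarrow>
      cell F i2 j1 \<Longrightarrow> cell F i2 j2 \<Longrightarrow>
      \<not> (T i1 j1 = 0 \<and> T i2 j2 = 0 \<and> T i1 j2 = 1 \<and> T i2 j1 = 1) \<and>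
      \<not> (T i1 j2 = 0 \<and> T i2 j1 = 0 \<and> T i1 j1 = 1 \<and> T i2 j2 = 1)"
    using EW unfolding EWtab_def by (elim CollectE conjE) blast
  have "i \<noteq> i'" using assms(6,8) by auto
  then consider "i < i'" | "i' < i" by linarith
  then show False
  proof cases
    case 1
    then show False using rect[OF 1 assms(5) assms(1-4)] assms(6-9) by simp
  next
    case 2
    then show False using rect[OF 2 assms(5) assms(3,4,1,2)] assms(6-9) by simp
  qed
qed

abbreviation c :: config where
  "c \<equiv> phi_TC F T"

definition ones_in_col :: "nat \<Rightarrow> nat set" where
  "ones_in_col j = {i. cell F i j \<and> T i j = 1}"

definition zeros_in_row :: "nat \<Rightarrow> nat set" where
  "zeros_in_row i = {j. cell F i j \<and> T i j = 0}"

lemma deg_col_eq: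
  assumes "j \<in> cols F"
  shows "deg F j = card (ones_in_col j) + c j"
proof -
  have "c j = card {i. cell F i j \<and> T i j = 0}"
    using assms ferrers_col_nonsink[OF ferrers assms] row_not_col[of j F] unfolding phi_TC_def by auto
  moreover have "deg F j = card {i. cell F i j}"
    unfolding deg_eq_deg_in_UNIV deg_in_col[OF assms] by simp
  moreover have "card {i. cell F i j} = card (ones_in_col j) + card {i. cell F i j \<and> T i j = 0}"
    unfolding ones_in_col_def
    using card_binary_split[OF finite_col_cells[of F j], of "\<lambda>i. T i j"] T_binary by simp
  ultimately show ?thesis by simp
qed

lemma deg_row_eq:
  assumes "i \<in> rows F" and "i \<noteq> 0"
  shows "deg F i = card (zeros_in_row i) + c i"
proof -
  have "c i = card {j. cell F i j \<and> T i j = 1}"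
    using assms ferrers_row_nonsink[OF ferrers] unfolding phi_TC_def by auto
  moreover have "deg F i = card {j. cell F i j}"
    unfolding deg_eq_deg_in_UNIV deg_in_row[OF assms(1)] by simp
  moreover have "card {j. cell F i j} = card (zeros_in_row i) + card {j. cell F i j \<and> T i j = 1}"
    unfolding zeros_in_row_def
    using card_binary_split[OF finite_row_cells[of F i], of "T i"] T_binary by simp
  ultimately show ?thesis by simp
qed

lemma stable_phi_TC: "stable F c"
  unfolding stable_def
proof
  fix v assume v: "v \<in> nonsink F"
  then consider "v \<in> rows F" "v \<noteq> 0" | "v \<in> cols F"
    using row_or_col[of v F] unfolding nonsink_def by auto
  then show "c v < deg F v"
  proof cases
    case 1
    then have "zeros_in_row v \<noteq> {}"
      using row_has_zero unfolding zeros_in_row_def by blast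
    then have "card (zeros_in_row v) > 0"
      using finite_row_cells[of F v] unfolding zeros_in_row_def by (auto simp: card_gt_0_iff)
    then show ?thesis using deg_row_eq[OF 1] by simp
  next
    case 2
    moreover have "0 < v" using v unfolding nonsink_def by simp
    ultimately have "cell F 0 v" using ferrers_zero_row[OF ferrers] unfolding cell_def by simp
    then have "0 \<in> ones_in_col v" using T_top_row unfolding ones_in_col_def by simp
    then have "card (ones_in_col v) > 0"
      using finite_col_cells[of F v] unfolding ones_in_col_def by (auto simp: card_gt_0_iff)
    then show ?thesis using deg_col_eq[OF 2] by simp
  qed
qed

definition agrees_with_cut :: "nat set \<Rightarrow> bool" where
  "agrees_with_cut S \<longleftrightarrow>
    (\<forall>i j. cell F i j \<longrightarrow>
      (i \<in> S \<and> j \<notin> S \<longrightarrow> T i j = 1) \<and> (j \<in> S \<and> i \<notin> S \<longrightarrow> T i j = 0))"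

lemma col_unstable_iff:
  assumes "fired F c S d" and "agrees_with_cut S" and "j \<in> cols F" and "j \<notin> S"
  shows "deg F j \<le> d j \<longleftrightarrow> ones_in_col j \<subseteq> S"
proof -
  have "d j = c j + card {i \<in> S. cell F i j}"
  proof -
    have "d j + (if j \<in> S then deg F j else 0) = c j + deg_in F S j"
      using assms(1) ferrers_col_nonsink[OF ferrers assms(3)] unfolding fired_def by blast
    then show ?thesis using assms(4) deg_in_col[OF assms(3)] by simp
  qed
  then have "deg F j \<le> d j \<longleftrightarrow> card (ones_in_col j) \<le> card {i \<in> S. cell F i j}"
    using deg_col_eq[OF assms(3)] by simp
  also have "\<dots> \<longleftrightarrow> {i \<in> S. cell F i j} = ones_in_col j"
    using assms(2,4) finite_col_cells[of F j]
    by (intro card_le_iff_eq_subset) (auto simp: ones_in_col_def agrees_with_cut_def)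
  also have "\<dots> \<longleftrightarrow> ones_in_col j \<subseteq> S"
    using assms(2,4) unfolding ones_in_col_def agrees_with_cut_def by auto
  finally show ?thesis .
qed

lemma row_unstable_iff:
  assumes "fired F c S d" and "agrees_with_cut S" and "i \<in> rows F" "i \<noteq> 0" and "i \<notin> S"
  shows "deg F i \<le> d i \<longleftrightarrow> zeros_in_row i \<subseteq> S"
proof -
  have "d i = c i + card {j \<in> S. cell F i j}"
  proof -
    have "d i + (if i \<in> S then deg F i else 0) = c i + deg_in F S i"
      using assms(1) ferrers_row_nonsink[OF ferrers assms(3,4)] unfolding fired_def by blast
    then show ?thesis using assms(5) deg_in_row[OF assms(3)] by simp
  qed
  then have "deg F i \<le> d i \<longleftrightarrow> card (zeros_in_row i) \<le> card {j \<in> S. cell F i j}"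
    using deg_row_eq[OF assms(3,4)] by simp
  also have "\<dots> \<longleftrightarrow> {j \<in> S. cell F i j} = zeros_in_row i"
    using assms(2,5) finite_row_cells[of F i]
    by (intro card_le_iff_eq_subset) (auto simp: zeros_in_row_def agrees_with_cut_def)
  also have "\<dots> \<longleftrightarrow> zeros_in_row i \<subseteq> S"
    using assms(2,5) unfolding zeros_in_row_def agrees_with_cut_def by auto
  finally show ?thesis .
qed

lemma agrees_with_cut_add_cols:
  assumes "agrees_with_cut S" and "B \<subseteq> cols F" and "\<forall>j \<in> B. ones_in_col j \<subseteq> S"
  shows "agrees_with_cut (S \<union> B)"
  unfolding agrees_with_cut_def
proof (intro allI impI)
  fix i j assume ij: "cell F i j"
  then have "i \<notin> B" using assms(2) cellD row_not_col by blast
  moreover have "T i j = 0" if "j \<in> B" "i \<notin> S"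
    using assms(3) that ij T_binary unfolding ones_in_col_def by blast
  ultimately show "(i \<in> S \<union> B \<and> j \<notin> S \<union> B \<longrightarrow> T i j = 1) \<and>
      (j \<in> S \<union> B \<and> i \<notin> S \<union> B \<longrightarrow> T i j = 0)"
    using assms(1) ij unfolding agrees_with_cut_def by blast
qed

lemma agrees_with_cut_add_rows:
  assumes "agrees_with_cut S" and "B \<subseteq> rows F" and "\<forall>i \<in> B. zeros_in_row i \<subseteq> S"
  shows "agrees_with_cut (S \<union> B)"
  unfolding agrees_with_cut_def
proof (intro allI impI)
  fix i j assume ij: "cell F i j"
  then have "j \<notin> B" using assms(2) cellD row_not_col by blast
  moreover have "T i j = 1" if "i \<in> B" "j \<notin> S"
    using assms(3) that ij T_binary unfolding zeros_in_row_def by blast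
  ultimately show "(i \<in> S \<union> B \<and> j \<notin> S \<union> B \<longrightarrow> T i j = 1) \<and>
      (j \<in> S \<union> B \<and> i \<notin> S \<union> B \<longrightarrow> T i j = 0)"
    using assms(1) ij unfolding agrees_with_cut_def by blast
qed

lemma canon_blk_odd:
  assumes "odd k" and "agrees_with_cut (toppled F c k)"
  shows "canon_blk F c k = {j \<in> cols F. j \<notin> toppled F c k \<and> ones_in_col j \<subseteq> toppled F c k}"
proof -
  have "0 < k" using assms(1) by (rule odd_pos)
  then show ?thesis
    using toppled_canon_blk_disjoint[OF stable_phi_TC, of k] ferrers_col_nonsink[OF ferrers]
      col_unstable_iff[OF canon_cfg_fired[OF stable_phi_TC] assms(2)] assms(1)
    by (auto simp: canon_blk_pos)
qed

lemma canon_blk_even: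
  assumes "even k" and "0 < k" and "agrees_with_cut (toppled F c k)"
  shows "canon_blk F c k =
    {i \<in> rows F. i \<noteq> 0 \<and> i \<notin> toppled F c k \<and> zeros_in_row i \<subseteq> toppled F c k}"
  using assms toppled_canon_blk_disjoint[OF stable_phi_TC, of k] ferrers_row_nonsink[OF ferrers]
    row_unstable_iff[OF canon_cfg_fired[OF stable_phi_TC] assms(3)]
  by (auto simp: canon_blk_pos nonsink_def)

lemma toppled_agrees_with_cut: "agrees_with_cut (toppled F c k)"
proof (induction k)
  case 0
  show ?case unfolding agrees_with_cut_def by simp
next
  case (Suc k)
  consider "k = 0" | "odd k" | "even k" "0 < k" by blast
  then show ?case
  proof cases
    case 1
    have "zeros_in_row 0 = {}" using T_top_row unfolding zeros_in_row_def by fastforce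
    then show ?thesis
      using Suc agrees_with_cut_add_rows[of "toppled F c 0" "{0}"] ferrers_zero_row[OF ferrers] 1
      by (simp add: toppled_Suc)
  next
    case 2
    then show ?thesis
      using Suc agrees_with_cut_add_cols canon_blk_odd unfolding toppled_Suc by simp
  next
    case 3
    then show ?thesis
      using Suc agrees_with_cut_add_rows canon_blk_even unfolding toppled_Suc by simp
  qed
qed

lemma no_blocking_pair:
  assumes "C \<noteq> {}"
    and "\<forall>j \<in> C. \<exists>i \<in> R. cell F i j \<and> T i j = 1"
    and "\<forall>i \<in> R. \<exists>j \<in> C. cell F i j \<and> T i j = 0"
  shows False
  using assms
proof (induction "card C" arbitrary: C R rule: less_induct)
  case less
  have "C \<subseteq> {..fst F}" using less.prems(2) cellD by fastforce
  then have fin: "finite C" by (rule finite_subset) simp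
  define a where "a = Max C"
  have a: "a \<in> C" "\<And>j. j \<in> C \<Longrightarrow> j \<le> a"
    using fin less.prems(1) unfolding a_def by simp_all
  \<comment> \<open>Descent to the rows holding a 1 in the last column a: by the rectangle condition, a
    row holding a 1 in a column where one of them holds a 0 must itself hold a 1 in column a.\<close>
  define R' where "R' = {i \<in> R. cell F i a \<and> T i a = 1}"
  define C' where "C' = {j \<in> C - {a}. \<exists>i \<in> R'. cell F i j \<and> T i j = 0}"
  have "card C' \<le> card (C - {a})"
    using fin unfolding C'_def by (intro card_mono) auto
  then have "card C' < card C"
    using card_Diff1_less[OF fin a(1)] by linarith
  moreover have zeros': "\<forall>i \<in> R'. \<exists>j \<in> C'. cell F i j \<and> T i j = 0"
    using less.prems(3) unfolding R'_def C'_def by fastforce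
  moreover have "\<forall>j \<in> C'. \<exists>i \<in> R'. cell F i j \<and> T i j = 1"
  proof
    fix j assume "j \<in> C'"
    then obtain i where j: "j \<in> C" "j \<noteq> a" and i: "i \<in> R'" "cell F i j" "T i j = 0"
      unfolding C'_def by blast
    obtain i' where i': "i' \<in> R" "cell F i' j" "T i' j = 1" using less.prems(2) j(1) by blast
    have "j < a" using a(2)[OF j(1)] j(2) by simp
    have ia: "cell F i a" "T i a = 1" using i(1) unfolding R'_def by simp_all
    have i'a: "cell F i' a" using cell_right[OF i'(2) \<open>j < a\<close>] cellD[OF ia(1)] by simp
    moreover have "T i' a = 1"
      using T_binary[OF i'a] no_crossing[OF i(2) ia(1) i'(2) i'a \<open>j < a\<close> i(3) ia(2) i'(3)] by auto
    ultimately show "\<exists>i \<in> R'. cell F i j \<and> T i j = 1"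
      using i' unfolding R'_def by blast
  qed
  moreover have "C' \<noteq> {}"
  proof -
    obtain i where "i \<in> R" "cell F i a" "T i a = 1" using less.prems(2) a(1) by blast
    then show ?thesis using zeros' unfolding R'_def by blast
  qed
  ultimately show False using less.hyps by blast
qed

lemma toppled_grows:
  assumes "odd k" and "toppled F c k \<noteq> {0..fst F}"
  shows "toppled F c k \<subset> toppled F c (Suc (Suc k))"
proof (rule ccontr)
  let ?S = "toppled F c k"
  assume "\<not> ?S \<subset> toppled F c (Suc (Suc k))"
  then have S1: "toppled F c (Suc k) = ?S" and S2: "toppled F c (Suc (Suc k)) = ?S"
    unfolding toppled_Suc by auto
  have "canon_blk F c k \<subseteq> toppled F c (Suc k)" "canon_blk F c (Suc k) \<subseteq> toppled F c (Suc (Suc k))"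
    unfolding toppled_Suc by simp_all
  then have no_blk: "canon_blk F c k = {}" "canon_blk F c (Suc k) = {}"
    using toppled_canon_blk_disjoint[OF stable_phi_TC, of k]
      toppled_canon_blk_disjoint[OF stable_phi_TC, of "Suc k"] S1 S2 by auto
  have ones: "\<forall>j \<in> cols F - ?S. \<exists>i \<in> rows F - ?S. cell F i j \<and> T i j = 1"
  proof
    fix j assume "j \<in> cols F - ?S"
    then have "\<not> ones_in_col j \<subseteq> ?S"
      using no_blk(1) canon_blk_odd[OF assms(1) toppled_agrees_with_cut] by blast
    then show "\<exists>i \<in> rows F - ?S. cell F i j \<and> T i j = 1"
      unfolding ones_in_col_def using cellD by blast
  qed
  have "0 \<in> ?S" using odd_pos[OF assms(1)] unfolding toppled_def by force
  have zeros: "\<forall>i \<in> rows F - ?S. \<exists>j \<in> cols F - ?S. cell F i j \<and> T i j = 0"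
  proof
    fix i assume i: "i \<in> rows F - ?S"
    then have "i \<noteq> 0" using \<open>0 \<in> ?S\<close> by (metis DiffD2)
    then have "\<not> zeros_in_row i \<subseteq> ?S"
      using i no_blk(2) canon_blk_even[of "Suc k", OF _ _ toppled_agrees_with_cut] assms(1) S1
      by auto
    then show "\<exists>j \<in> cols F - ?S. cell F i j \<and> T i j = 0"
      unfolding zeros_in_row_def using cellD by blast
  qed
  obtain v where "v \<le> fst F" "v \<notin> ?S" using assms(2) toppled_subset by fastforce
  then have "cols F - ?S \<noteq> {}" using row_or_col zeros by blast
  then show False using no_blocking_pair[OF _ ones zeros] by blast
qed

lemma topples_eventually:
  assumes "v \<le> fst F"
  shows "\<exists>k. v \<in> canon_blk F c k"
proof -
  have "toppled F c (2 * card {0..fst F} + 1) = {0..fst F}"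
    using chain_saturates[of "{0..fst F}" "\<lambda>m. toppled F c (2 * m + 1)"]
      toppled_subset toppled_mono toppled_grows by simp
  then show ?thesis using assms unfolding toppled_def by auto
qed

lemma phi_CT_phi_TC: "phi_CT F c = T"
proof (intro ext)
  fix i j
  show "phi_CT F c i j = T i j"
  proof (cases "cell F i j")
    case True
    note ij = cellD[OF True]
    obtain ki kj where "i \<in> canon_blk F c ki" "j \<in> canon_blk F c kj"
      using topples_eventually ij ferrers_row_le[OF ferrers] by (meson less_imp_le order.trans)
    note time_i = in_toppled_iff_topple_time[OF this(1)]
      and time_j = in_toppled_iff_topple_time[OF this(2)]
    have "topple_time F c i \<noteq> topple_time F c j"
      using canon_blk_row_col_distinct ij topple_time_in_canon_blk
        \<open>i \<in> canon_blk F c ki\<close> \<open>j \<in> canon_blk F c kj\<close> by metis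
    then consider "topples_before F c i j" | "topples_before F c j i"
      unfolding topples_before_def by linarith
    then show ?thesis
    proof cases
      case 1
      then have "T i j = 1"
        using toppled_agrees_with_cut time_i time_j True
        unfolding topples_before_def agrees_with_cut_def by blast
      then show ?thesis using 1 True unfolding phi_CT_def by simp
    next
      case 2
      then have "T i j = 0"
        using toppled_agrees_with_cut time_i time_j True
        unfolding topples_before_def agrees_with_cut_def by blast
      then show ?thesis using 2 True unfolding phi_CT_def topples_before_def by simp
    qed
  qed (simp add: phi_CT_def T_outside)
qed

end

theorem proposition3p10:
  fixes F :: ferrers
  assumes "ferrers F"
    and "bij_betw (phi_TC F) (EWtab F) (Rec_min F)"
  shows "(\<forall>c \<in> Rec_min F. phi_CT F c \<in> EWtab F \<and> phi_TC F (phi_CT F c) = c) \<and>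
         (\<forall>T \<in> EWtab F. phi_CT F (phi_TC F T) = T)"
proof -
  have left_inverse: "\<forall>T \<in> EWtab F. phi_CT F (phi_TC F T) = T"
    using ew_tableau.phi_CT_phi_TC assms(1) ew_tableau.intro by blast
  moreover have "\<forall>c \<in> Rec_min F. phi_CT F c \<in> EWtab F \<and> phi_TC F (phi_CT F c) = c"
  proof
    fix c assume "c \<in> Rec_min F"
    then obtain T where "T \<in> EWtab F" "c = phi_TC F T"
      using assms(2) unfolding bij_betw_def by auto
    then show "phi_CT F c \<in> EWtab F \<and> phi_TC F (phi_CT F c) = c"
      using left_inverse by simp
  qed
  ultimately show ?thesis by blast
qed

end
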